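(* Let $m\ge1$ and let $N_m$ be the semiring of polynomials in $X_1,\ldots,X_m$ with nonnegative integer coefficients. Let $P\in N_m$ be a sum of $n$ monomials (possibly repeated, each with coefficient $1$), where $n$ is prime. Then $P$ has unique factorisation inside $N_m$, i.e. any two factorisations of $P$ into irreducible elements of $N_m$ coincide up to the order of the factors.
   Context: An element $Q\in N_m$ with $Q\neq 0,1$ is irreducible in $N_m$ if whenever $Q=ST$ with $S,T\in N_m$, one of $S,T$ equals $1$. The number of monomials of $P$ (counted with repetition) equals $P(1,\ldots,1)$. *)

theory Defs
  imports Main "HOL-Library.Poly_Mapping" "HOL-Library.Multiset" "HOL-Computational_Algebra.Primes"
begin

text \<open>Polynomials in variables X_0,...,X_(m-1) with natural-number coefficients:
  finitely supported maps from exponent vectors exponent vectors to nat coefficients,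
  with the usual (convolution) product.\<close>
type_synonym npoly = "(nat \<Rightarrow>\<^sub>0 nat) \<Rightarrow>\<^sub>0 nat"

definition Nm :: "nat \<Rightarrow> npoly set" where
  "Nm m = {P :: npoly. \<forall>mon \<in> Poly_Mapping.keys P. Poly_Mapping.keys (mon :: nat \<Rightarrow>\<^sub>0 nat) \<subseteq> {..<m}}"

definition irreducible_Nm :: "nat \<Rightarrow> npoly \<Rightarrow> bool" where
  "irreducible_Nm m Q \<longleftrightarrow> Q \<in> Nm m \<and> Q \<noteq> 0 \<and> Q \<noteq> 1 \<and>
     (\<forall>S \<in> Nm m. \<forall>T \<in> Nm m. Q = S * T \<longrightarrow> S = 1 \<or> T = 1)"

text \<open>Number of monomials counted with repetition, i.e. P(1,...,1).\<close>
definition num_monomials :: "npoly \<Rightarrow> nat" where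
  "num_monomials P = (\<Sum>mon \<in> Poly_Mapping.keys P. Poly_Mapping.lookup P mon)"

end

theory Submission
  imports Defs
begin

text \<open>The count of monomials, P(1,...,1), is multiplicative. Hence in a factorisation of P
  into irreducibles exactly one factor Q has a prime number of monomials, and every other
  factor is an irreducible monomial, i.e. a variable. An irreducible Q with more than one
  monomial is divisible by no variable, so every variable is missing from some monomial of Q.
  Then in P = X^a Q the exponent a_i is the least exponent of X_i among the monomials of P,
  so both X^a and Q are determined by P.\<close>

lemma num_monomials_eq_sum:
  assumes "finite S" "Poly_Mapping.keys P \<subseteq> S"
  shows "num_monomials P = sum (Poly_Mapping.lookup P) S"
  unfolding num_monomials_def
  using assms by (intro sum.mono_neutral_left) (auto simp: in_keys_iff)

lemma num_monomials_add: "num_monomials (P + Q) = num_monomials P + num_monomials Q"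
proof -
  let ?S = "Poly_Mapping.keys P \<union> Poly_Mapping.keys Q"
  have "num_monomials (P + Q) = sum (Poly_Mapping.lookup (P + Q)) ?S"
    by (rule num_monomials_eq_sum) (auto simp: in_keys_iff lookup_add)
  also have "\<dots> = sum (Poly_Mapping.lookup P) ?S + sum (Poly_Mapping.lookup Q) ?S"
    by (simp add: lookup_add sum.distrib)
  finally show ?thesis
    by (simp add: num_monomials_eq_sum[symmetric])
qed

lemma num_monomials_single [simp]: "num_monomials (Poly_Mapping.single a c) = c"
  by (simp add: num_monomials_def)

lemma num_monomials_zero [simp]: "num_monomials 0 = 0"
  by (simp add: num_monomials_def)

lemma num_monomials_one [simp]: "num_monomials 1 = 1"
  by (metis num_monomials_single single_one)

lemma update_eq_add_single:
  "a \<notin> Poly_Mapping.keys f \<Longrightarrow> Poly_Mapping.update a b f = f + Poly_Mapping.single a b"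
  by (rule poly_mapping_eqI) (auto simp: lookup_update lookup_add lookup_single in_keys_iff when_def)

lemma num_monomials_single_mult:
  "num_monomials (Poly_Mapping.single a c * Q) = c * num_monomials Q"
  by (induction Q rule: update_induct)
    (simp_all add: update_eq_add_single distrib_left mult_single num_monomials_add)

lemma num_monomials_mult: "num_monomials (P * Q) = num_monomials P * num_monomials Q"
  by (induction P rule: update_induct)
    (simp_all add: update_eq_add_single distrib_right num_monomials_add num_monomials_single_mult)

lemma num_monomials_eq_1_iff:
  "num_monomials P = 1 \<longleftrightarrow> (\<exists>k. P = Poly_Mapping.single k 1)"
proof
  assume P1: "num_monomials P = 1"
  then obtain k where k: "k \<in> Poly_Mapping.keys P"
    by (metis all_not_in_conv keys_eq_empty num_monomials_zero zero_neq_one)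
  have "Poly_Mapping.lookup P k + (\<Sum>x\<in>Poly_Mapping.keys P - {k}. Poly_Mapping.lookup P x) = 1"
    using P1 k unfolding num_monomials_def by (simp add: sum.remove)
  moreover have "Poly_Mapping.lookup P k \<noteq> 0"
    using k by (simp add: in_keys_iff)
  ultimately have "Poly_Mapping.lookup P k = 1"
    and "(\<Sum>x\<in>Poly_Mapping.keys P - {k}. Poly_Mapping.lookup P x) = 0"
    by linarith+
  hence "P = Poly_Mapping.single k 1"
    by (intro poly_mapping_eqI) (auto simp: lookup_single when_def in_keys_iff)
  thus "\<exists>k. P = Poly_Mapping.single k 1" ..
qed auto

lemma lookup_single_mult:
  "Poly_Mapping.lookup (Poly_Mapping.single a c * Q) k =
     c * (\<Sum>q. Poly_Mapping.lookup Q q when k = a + q)"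
  by (simp add: lookup_mult lookup_single when_mult mult_when)

lemma lookup_single_mult_add:
  fixes a :: "'a :: cancel_comm_monoid_add"
  shows "Poly_Mapping.lookup (Poly_Mapping.single a c * Q) (a + j) = c * Poly_Mapping.lookup Q j"
  by (simp add: lookup_single_mult)

lemma lookup_single_mult_nonzero_obtains:
  assumes "Poly_Mapping.lookup (Poly_Mapping.single a c * Q) k \<noteq> 0"
  obtains j where "k = a + j"
proof -
  have "\<exists>j. k = a + j"
  proof (rule ccontr)
    assume "\<nexists>j. k = a + j"
    hence "(Poly_Mapping.lookup Q q when k = a + q) = 0" for q
      by auto
    thus False
      using assms by (simp add: lookup_single_mult)
  qed
  thus thesis
    using that by blast
qed

definition no_var_factor :: "(('a \<Rightarrow>\<^sub>0 nat) \<Rightarrow>\<^sub>0 'b::zero) \<Rightarrow> bool" where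
  "no_var_factor Q \<longleftrightarrow> (\<forall>i. \<exists>k\<in>Poly_Mapping.keys Q. Poly_Mapping.lookup k i = 0)"

lemma exponent_le_if_single_mult_eq:
  fixes Q Q' :: "('a \<Rightarrow>\<^sub>0 nat) \<Rightarrow>\<^sub>0 'b::semiring_1"
  assumes eq: "Poly_Mapping.single a 1 * Q = Poly_Mapping.single b 1 * Q'"
    and "no_var_factor Q'"
  shows "Poly_Mapping.lookup a i \<le> Poly_Mapping.lookup b i"
proof -
  obtain k where k: "k \<in> Poly_Mapping.keys Q'" "Poly_Mapping.lookup k i = 0"
    using \<open>no_var_factor Q'\<close> unfolding no_var_factor_def by blast
  have "Poly_Mapping.lookup (Poly_Mapping.single a 1 * Q) (b + k) \<noteq> 0"
    using k by (simp add: eq lookup_single_mult_add in_keys_iff)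
  then obtain j where "b + k = a + j"
    by (rule lookup_single_mult_nonzero_obtains)
  hence "Poly_Mapping.lookup (b + k) i = Poly_Mapping.lookup (a + j) i"
    by simp
  thus ?thesis
    using k by (simp add: lookup_add)
qed

lemma single_mult_cancel:
  fixes Q Q' :: "('a \<Rightarrow>\<^sub>0 nat) \<Rightarrow>\<^sub>0 'b::semiring_1"
  assumes eq: "Poly_Mapping.single a 1 * Q = Poly_Mapping.single b 1 * Q'"
    and "no_var_factor Q" "no_var_factor Q'"
  shows "a = b" and "Q = Q'"
proof -
  show ab: "a = b"
  proof (rule poly_mapping_eqI)
    fix i
    show "Poly_Mapping.lookup a i = Poly_Mapping.lookup b i"
      using exponent_le_if_single_mult_eq[OF eq \<open>no_var_factor Q'\<close>, of i]
        exponent_le_if_single_mult_eq[OF eq[symmetric] \<open>no_var_factor Q\<close>, of i]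
      by simp
  qed
  show "Q = Q'"
  proof (rule poly_mapping_eqI)
    fix j
    have "Poly_Mapping.lookup (Poly_Mapping.single a 1 * Q) (a + j) =
          Poly_Mapping.lookup (Poly_Mapping.single a 1 * Q') (a + j)"
      using eq ab by simp
    thus "Poly_Mapping.lookup Q j = Poly_Mapping.lookup Q' j"
      by (simp add: lookup_single_mult_add)
  qed
qed

definition var :: "nat \<Rightarrow> npoly" where
  "var i = Poly_Mapping.single (Poly_Mapping.single i 1) 1"

lemma single_eq_1_iff: "(Poly_Mapping.single k 1 :: npoly) = 1 \<longleftrightarrow> k = 0"
  by (metis lookup_single_eq lookup_single_not_eq one_neq_zero single_one)

lemma var_neq_1: "var i \<noteq> 1"
  unfolding var_def single_eq_1_iff by (metis lookup_single_eq lookup_zero one_neq_zero)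

lemma var_in_Nm: "i < m \<Longrightarrow> var i \<in> Nm m"
  by (simp add: var_def Nm_def)

lemma prod_list_map_var:
  "prod_list (map var xs) = Poly_Mapping.single (\<Sum>i\<leftarrow>xs. Poly_Mapping.single i 1) 1"
proof (induction xs)
  case Nil
  show ?case
    by (metis list.map(1) prod_list.Nil single_one sum_list.Nil)
qed (simp add: var_def mult_single)

lemma lookup_sum_list_single:
  "Poly_Mapping.lookup (\<Sum>i\<leftarrow>xs. Poly_Mapping.single i 1) j = count (mset xs) j"
  by (induction xs) (auto simp: lookup_add lookup_single when_def)

lemma single_add_minus_single:
  assumes "Poly_Mapping.lookup (k :: 'a \<Rightarrow>\<^sub>0 nat) i \<noteq> 0"
  shows "k = Poly_Mapping.single i 1 + (k - Poly_Mapping.single i 1)"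
  using assms by (intro poly_mapping_eqI) (auto simp: lookup_add lookup_minus lookup_single when_def)

text \<open>Reindexing along k \<mapsto> e_i + k divides by X_i.\<close>

lemma var_mult_map_key:
  assumes "\<forall>k\<in>Poly_Mapping.keys Q. Poly_Mapping.lookup k i \<noteq> 0"
  shows "Q = var i * Poly_Mapping.map_key ((+) (Poly_Mapping.single i 1)) Q"
    (is "Q = var i * ?R")
proof (rule poly_mapping_eqI)
  fix k
  have lookup_R: "Poly_Mapping.lookup ?R j = Poly_Mapping.lookup Q (Poly_Mapping.single i 1 + j)" for j
    by (simp add: map_key.rep_eq inj_def)
  show "Poly_Mapping.lookup Q k = Poly_Mapping.lookup (var i * ?R) k"
  proof (cases "Poly_Mapping.lookup k i = 0")
    case True
    hence "k \<notin> Poly_Mapping.keys Q"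
      using assms by blast
    hence "Poly_Mapping.lookup Q k = 0"
      by (simp add: in_keys_iff)
    moreover have "Poly_Mapping.lookup (var i * ?R) k = 0"
    proof (rule ccontr)
      assume "Poly_Mapping.lookup (var i * ?R) k \<noteq> 0"
      then obtain j where "k = Poly_Mapping.single i 1 + j"
        unfolding var_def by (rule lookup_single_mult_nonzero_obtains)
      with True show False
        by (simp add: lookup_add)
    qed
    ultimately show ?thesis by simp
  next
    case False
    define j where "j = k - Poly_Mapping.single i 1"
    have k: "k = Poly_Mapping.single i 1 + j"
      unfolding j_def using False by (rule single_add_minus_single)
    show ?thesis
      unfolding k var_def lookup_single_mult_add lookup_R by simp
  qed
qed

lemma irreducible_Nm_num_monomials_1:
  assumes irr: "irreducible_Nm m f" and "num_monomials f = 1"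
  shows "\<exists>i<m. f = var i"
proof -
  obtain k where f: "f = Poly_Mapping.single k 1"
    using \<open>num_monomials f = 1\<close> num_monomials_eq_1_iff by blast
  have keys_k: "Poly_Mapping.keys k \<subseteq> {..<m}"
    using irr f by (simp add: irreducible_Nm_def Nm_def)
  have "k \<noteq> 0"
    using irr f single_eq_1_iff unfolding irreducible_Nm_def by blast
  then obtain i where i: "i \<in> Poly_Mapping.keys k"
    by (metis all_not_in_conv keys_eq_empty)
  define k' where "k' = k - Poly_Mapping.single i 1"
  have k: "k = Poly_Mapping.single i 1 + k'"
    using i single_add_minus_single by (auto simp: k'_def in_keys_iff)
  have "i < m"
    using i keys_k by auto
  have "Poly_Mapping.keys k' \<subseteq> Poly_Mapping.keys k"
    by (auto simp: k'_def in_keys_iff lookup_minus)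
  hence "Poly_Mapping.keys k' \<subseteq> {..<m}"
    using keys_k by blast
  hence "Poly_Mapping.single k' 1 \<in> Nm m"
    by (simp add: Nm_def)
  moreover have "f = var i * Poly_Mapping.single k' 1"
    by (simp add: f k var_def mult_single)
  ultimately have "Poly_Mapping.single k' 1 = (1 :: npoly)"
    using irr var_in_Nm[OF \<open>i < m\<close>] var_neq_1 unfolding irreducible_Nm_def by blast
  hence "k' = 0"
    using single_eq_1_iff by blast
  hence "f = var i"
    by (simp add: f k var_def)
  with \<open>i < m\<close> show ?thesis by blast
qed

lemma irreducible_Nm_no_var_factor:
  assumes irr: "irreducible_Nm m Q" and "num_monomials Q \<noteq> 1"
  shows "no_var_factor Q"
  unfolding no_var_factor_def
proof (rule ccontr)
  assume "\<not> (\<forall>i. \<exists>k\<in>Poly_Mapping.keys Q. Poly_Mapping.lookup k i = 0)"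
  then obtain i where all: "\<forall>k\<in>Poly_Mapping.keys Q. Poly_Mapping.lookup k i \<noteq> 0"
    by auto
  define R where "R = Poly_Mapping.map_key ((+) (Poly_Mapping.single i 1)) Q"
  have Q: "Q = var i * R"
    unfolding R_def using all by (rule var_mult_map_key)
  have QN: "Q \<in> Nm m"
    using irr by (simp add: irreducible_Nm_def)
  obtain k where k: "k \<in> Poly_Mapping.keys Q"
    using irr by (metis all_not_in_conv irreducible_Nm_def keys_eq_empty)
  have "i \<in> Poly_Mapping.keys k"
    using all k by (simp add: in_keys_iff)
  hence "i < m"
    using QN k by (auto simp: Nm_def)
  have keys_R: "Poly_Mapping.keys R = (+) (Poly_Mapping.single i 1) -` Poly_Mapping.keys Q"
    unfolding R_def by (rule keys_map_key) (simp add: inj_def)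
  have "R \<in> Nm m"
    using QN by (auto simp: Nm_def keys_R in_keys_iff lookup_add subset_iff)
  moreover have "R \<noteq> 1"
    using Q \<open>num_monomials Q \<noteq> 1\<close> by (auto simp: var_def)
  ultimately show False
    using irr Q var_in_Nm[OF \<open>i < m\<close>] var_neq_1 unfolding irreducible_Nm_def by blast
qed

lemma irreducible_factors_num_monomials_1:
  assumes "\<forall>f\<in>set fs. irreducible_Nm m f" and "num_monomials (prod_list fs) = 1"
  shows "\<exists>xs. fs = map var xs"
proof -
  have "\<forall>f\<in>set fs. num_monomials f = 1"
    using assms(2) by (induction fs) (simp_all add: num_monomials_mult)
  hence "\<forall>f\<in>set fs. \<exists>i. f = var i"
    using assms(1) irreducible_Nm_num_monomials_1 by blast
  thus ?thesis
    by (simp add: ex_map_conv)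
qed

lemma irreducible_factors_num_monomials_prime:
  assumes "\<forall>f\<in>set fs. irreducible_Nm m f" and "prime (num_monomials (prod_list fs))"
  shows "\<exists>xs Q. mset fs = mset (map var xs) + {#Q#} \<and> irreducible_Nm m Q \<and>
     num_monomials Q = num_monomials (prod_list fs) \<and> prod_list fs = prod_list (map var xs) * Q"
  using assms
proof (induction fs)
  case (Cons f fs)
  have num: "num_monomials (prod_list (f # fs)) = num_monomials f * num_monomials (prod_list fs)"
    by (simp add: num_monomials_mult)
  with Cons.prems(2) consider "num_monomials f = 1" | "num_monomials (prod_list fs) = 1"
    using prime_product by metis
  thus ?case
  proof cases
    case 1
    then obtain i where f: "f = var i"
      using Cons.prems(1) irreducible_Nm_num_monomials_1 by auto
    obtain xs Q where "mset fs = mset (map var xs) + {#Q#}" "irreducible_Nm m Q"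
      "num_monomials Q = num_monomials (prod_list fs)" "prod_list fs = prod_list (map var xs) * Q"
      using Cons 1 num by auto
    thus ?thesis
      using 1 num by (intro exI[of _ "i # xs"] exI[of _ Q]) (simp add: f mult.assoc)
  next
    case 2
    obtain xs where "fs = map var xs"
      using irreducible_factors_num_monomials_1 Cons.prems(1) 2 by force
    thus ?thesis
      using Cons.prems(1) 2 num by (intro exI[of _ xs] exI[of _ f]) (simp add: mult.commute)
  qed
qed simp

theorem mainTheorem4:
  fixes m n :: nat and P :: npoly
  assumes "m \<ge> 1"
    and "P \<in> Nm m"
    and "num_monomials P = n"
    and "prime n"
  shows "\<forall>fs gs. (\<forall>f \<in> set fs. irreducible_Nm m f) \<and> prod_list fs = P \<and>
                 (\<forall>g \<in> set gs. irreducible_Nm m g) \<and> prod_list gs = P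
                 \<longrightarrow> mset fs = mset gs"
proof (intro allI impI)
  fix fs gs :: "npoly list"
  assume H: "(\<forall>f \<in> set fs. irreducible_Nm m f) \<and> prod_list fs = P \<and>
             (\<forall>g \<in> set gs. irreducible_Nm m g) \<and> prod_list gs = P"
  have "n \<noteq> 1"
    using \<open>prime n\<close> by auto
  obtain xs Q where fs: "mset fs = mset (map var xs) + {#Q#}" "no_var_factor Q"
    and P: "P = prod_list (map var xs) * Q"
    using irreducible_factors_num_monomials_prime[of fs m] irreducible_Nm_no_var_factor
      H assms(3,4) \<open>n \<noteq> 1\<close> by metis
  obtain ys Q' where gs: "mset gs = mset (map var ys) + {#Q'#}" "no_var_factor Q'"
    and P': "P = prod_list (map var ys) * Q'"
    using irreducible_factors_num_monomials_prime[of gs m] irreducible_Nm_no_var_factor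
      H assms(3,4) \<open>n \<noteq> 1\<close> by metis
  have "Poly_Mapping.single (\<Sum>i\<leftarrow>xs. Poly_Mapping.single i 1) 1 * Q =
        Poly_Mapping.single (\<Sum>i\<leftarrow>ys. Poly_Mapping.single i 1) 1 * Q'"
    using P P' by (simp only: prod_list_map_var)
  note cancel = single_mult_cancel[OF this fs(2) gs(2)]
  have "mset xs = mset ys"
    by (rule multiset_eqI) (metis cancel(1) lookup_sum_list_single)
  thus "mset fs = mset gs"
    using fs(1) gs(1) cancel(2) by (simp add: mset_map)
qed

end
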